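(* For every finite word $\bar\alpha\in\{0,1\}^k$, $k\in\mathbb N$, the sets $F_{\bar\alpha}=T_{\bar\alpha}(I)$ and $\mathcal K_{\bar\alpha}$ are connected.
   Context: Let $I=[0,1]^3$. Let $\mathcal D_0=\{(i,2,2),(2,i,2),(2,2,i): i=0,1,2,3,4\}$ and $\mathcal D_1=\{d\in\{0,\ldots,4\}^3:\ \text{at least two coordinates of } d \text{ lie in }\{0,4\}\}$. For $i=0,1$ let $T_i(A)=\bigcup_{d\in\mathcal D_i}\frac{d+A}{5}$ for $A\subset\mathbb R^3$, and for $\bar\alpha=\alpha_1\cdots\alpha_k$ let $T_{\bar\alpha}=T_{\alpha_1}\circ\cdots\circ T_{\alpha_k}$. $\mathcal K_{\bar\alpha}$ is the unique non-empty compact set with $\mathcal K_{\bar\alpha}=T_{\bar\alpha}(\mathcal K_{\bar\alpha})$ (the attractor of the iterated function system whose Hutchinson operator is $T_{\bar\alpha}$). *)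

theory Defs
  imports "HOL-Analysis.Analysis"
begin

definition cubeI :: "(real ^ 3) set" where
  "cubeI = cbox (vec 0) (vec 1)"

definition vec3 :: "nat \<times> nat \<times> nat \<Rightarrow> real ^ 3" where
  "vec3 d = (case d of (a, b, c) \<Rightarrow> vector [real a, real b, real c])"

definition digits0 :: "(nat \<times> nat \<times> nat) set" where
  "digits0 = {(i, 2, 2) | i. i \<le> 4} \<union> {(2, i, 2) | i. i \<le> 4} \<union> {(2, 2, i) | i. i \<le> 4}"

definition digits1 :: "(nat \<times> nat \<times> nat) set" where
  "digits1 = {(a, b, c). a \<le> 4 \<and> b \<le> 4 \<and> c \<le> 4 \<and>
      ((a \<in> {0, 4} \<and> b \<in> {0, 4}) \<or> (a \<in> {0, 4} \<and> c \<in> {0, 4}) \<or> (b \<in> {0, 4} \<and> c \<in> {0, 4}))}"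

definition digits :: "nat \<Rightarrow> (nat \<times> nat \<times> nat) set" where
  "digits i = (if i = 0 then digits0 else digits1)"

definition Tmap :: "nat \<Rightarrow> (real ^ 3) set \<Rightarrow> (real ^ 3) set" where
  "Tmap i A = (\<Union>d\<in>digits i. (\<lambda>x. (1/5) *\<^sub>R (vec3 d + x)) ` A)"

definition Tword :: "nat list \<Rightarrow> (real ^ 3) set \<Rightarrow> (real ^ 3) set" where
  "Tword w = foldr (\<lambda>a f. Tmap a \<circ> f) w id"

definition Fset :: "nat list \<Rightarrow> (real ^ 3) set" where
  "Fset w = Tword w cubeI"

definition Kset :: "nat list \<Rightarrow> (real ^ 3) set" where
  "Kset w = (THE K. compact K \<and> K \<noteq> {} \<and> K = Tword w K)"

end

theory Submission
  imports Defs
begin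

text \<open>Call A good if it is connected and contains, for each coordinate direction e, two points
  p and p + e. Each T_i maps good sets to good sets: the pieces (d + A)/5 are connected, pieces of
  digits differing by e meet in the point (d + p + e)/5, the digits of D_i are connected under this
  adjacency, and D_i contains digits d and d + 4e, so T_i(A) contains (d + p)/5 and (d + p)/5 + e.
  The cube is good, hence so is F_w. The operator T_w is the Hutchinson operator of finitely many
  homotheties of ratio 5^-k, so its attractor K_w is the intersection of the decreasing sequence of
  compact connected sets T_w^n(I), which is connected.\<close>

lemma connected_UN_if_rtrancl_reachable:
  fixes S :: "'i \<Rightarrow> 'a::topological_space set"
  assumes conn: "\<And>i. i \<in> D \<Longrightarrow> connected (S i)"
    and root: "i0 \<in> D" "S i0 \<noteq> {}"
    and R: "R \<subseteq> D \<times> D" "\<And>i j. (i, j) \<in> R \<Longrightarrow> S i \<inter> S j \<noteq> {}"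
    and reach: "\<And>i. i \<in> D \<Longrightarrow> (i0, i) \<in> R\<^sup>*"
  shows "connected (\<Union>i\<in>D. S i)"
proof -
  have "\<exists>C. connected C \<and> S i0 \<union> S i \<subseteq> C \<and> C \<subseteq> (\<Union>i\<in>D. S i)" if "(i0, i) \<in> R\<^sup>*" for i
    using that
  proof (induction rule: rtrancl_induct)
    case base
    show ?case using conn root by blast
  next
    case (step j k)
    then obtain C where C: "connected C" "S i0 \<union> S j \<subseteq> C" "C \<subseteq> (\<Union>i\<in>D. S i)"
      by blast
    have "k \<in> D" using step.hyps(2) R(1) by blast
    moreover have "C \<inter> S k \<noteq> {}" using R(2)[OF step.hyps(2)] C(2) by blast
    ultimately have "connected (C \<union> S k)" "C \<union> S k \<subseteq> (\<Union>i\<in>D. S i)"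
      using C conn connected_Un by blast+
    then show ?case using C(2) by blast
  qed
  then obtain C where C: "\<And>i. i \<in> D \<Longrightarrow>
      connected (C i) \<and> S i0 \<union> S i \<subseteq> C i \<and> C i \<subseteq> (\<Union>i\<in>D. S i)"
    using reach by metis
  have "(\<Union>i\<in>D. S i) = \<Union>(C ` D)" using C by blast
  moreover have "connected (\<Union>(C ` D))"
    by (rule connected_Union) (use C root in blast)+
  ultimately show ?thesis by simp
qed

lemma rtrancl_along_path:
  assumes "sym R" and step: "\<And>t. t < n \<Longrightarrow> (f t, f (Suc t)) \<in> R" and "x \<le> n" "y \<le> n"
  shows "(f x, f y) \<in> R\<^sup>*"
proof -
  have up: "(f x, f y) \<in> R\<^sup>*" if "x \<le> y" "y \<le> n" for x y
    using that
  proof (induction y)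
    case (Suc y)
    show ?case
    proof (cases "x = Suc y")
      case False
      then have "(f x, f y) \<in> R\<^sup>*" using Suc by simp
      moreover have "(f y, f (Suc y)) \<in> R" using step Suc.prems(2) by simp
      ultimately show ?thesis by (rule rtrancl_into_rtrancl)
    qed simp
  qed simp
  show ?thesis
  proof (cases "x \<le> y")
    case False
    then have "(f y, f x) \<in> R\<^sup>*" using up assms by simp
    then show ?thesis using sym_rtrancl[OF \<open>sym R\<close>] by (auto dest: symD)
  qed (use up assms in simp)
qed

definition hutchinson :: "('a \<Rightarrow> 'b) set \<Rightarrow> 'a set \<Rightarrow> 'b set" where
  "hutchinson G A = (\<Union>g\<in>G. g ` A)"

lemma mono_hutchinson: "mono (hutchinson G)"
  by (auto simp: mono_def hutchinson_def)

lemma hutchinson_hutchinson: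
  "hutchinson G (hutchinson H A) = hutchinson ((\<lambda>(g, h). g \<circ> h) ` (G \<times> H)) A"
  unfolding hutchinson_def by force

lemma compact_hutchinson:
  assumes "finite G" "\<And>g. g \<in> G \<Longrightarrow> continuous_on UNIV g" "compact A"
  shows "compact (hutchinson G A)"
  unfolding hutchinson_def
  using assms by (intro compact_UN compact_continuous_image) (auto intro: continuous_on_subset)

lemma funpow_antimono_if_below:
  fixes H :: "'a::order \<Rightarrow> 'a"
  assumes "mono H" "H I \<le> I" "m \<le> n"
  shows "(H ^^ n) I \<le> (H ^^ m) I"
proof -
  have "(H ^^ Suc k) I \<le> (H ^^ k) I" for k
    by (induction k) (simp_all add: assms(2) monoD[OF assms(1)])
  then show ?thesis using lift_Suc_antimono_le[of "\<lambda>k. (H ^^ k) I"] assms(3) by blast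
qed

lemma hutchinson_contracts_distance:
  assumes lip: "\<And>g. g \<in> G \<Longrightarrow> r-lipschitz_on UNIV g"
    and close: "\<forall>a\<in>A. \<exists>b\<in>B. dist a b \<le> e"
  shows "\<forall>a\<in>hutchinson G A. \<exists>b\<in>hutchinson G B. dist a b \<le> r * e"
proof
  fix y assume "y \<in> hutchinson G A"
  then obtain g a where g: "g \<in> G" and a: "a \<in> A" and y: "y = g a"
    unfolding hutchinson_def by blast
  obtain b where b: "b \<in> B" "dist a b \<le> e" using close a by blast
  have "dist (g a) (g b) \<le> r * dist a b" using lipschitz_onD[OF lip[OF g]] by simp
  also have "\<dots> \<le> r * e" using b lipschitz_on_nonneg[OF lip[OF g]] by (simp add: mult_left_mono)
  finally show "\<exists>b\<in>hutchinson G B. dist y b \<le> r * e"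
    using g b y unfolding hutchinson_def by blast
qed

lemma hutchinson_fixpoint_subset:
  fixes K L :: "'a::metric_space set"
  assumes lip: "\<And>g. g \<in> G \<Longrightarrow> r-lipschitz_on UNIV g" and "r < 1"
    and K: "compact K" "hutchinson G K = K"
    and L: "compact L" "L \<noteq> {}" "hutchinson G L = L"
  shows "K \<subseteq> L"
proof
  fix x assume x: "x \<in> K"
  have "G \<noteq> {}" using L(2,3) by (auto simp: hutchinson_def)
  then have "0 \<le> r" using lip lipschitz_on_nonneg by blast
  define B where "B = diameter (K \<union> L)"
  have bdd: "bounded (K \<union> L)" using K(1) L(1) by (simp add: compact_imp_bounded)
  obtain b0 where b0: "b0 \<in> L" using L(2) by blast
  have close: "\<forall>a\<in>K. \<exists>b\<in>L. dist a b \<le> r ^ n * B" for n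
  proof (induction n)
    case 0
    show ?case using diameter_bounded_bound[OF bdd] b0 unfolding B_def by auto
  next
    case (Suc n)
    from hutchinson_contracts_distance[of G r K L, OF lip Suc.IH] show ?case
      by (simp add: K(2) L(3) mult.assoc)
  qed
  have "B \<ge> 0" unfolding B_def by (rule diameter_ge_0[OF bdd])
  have "\<exists>y\<in>L. dist y x < e" if "e > 0" for e
  proof -
    have "0 < B + 1" using \<open>B \<ge> 0\<close> by simp
    then have "0 < e / (B + 1)" using \<open>e > 0\<close> by simp
    then obtain n where n: "r ^ n < e / (B + 1)" using real_arch_pow_inv \<open>r < 1\<close> by blast
    obtain b where b: "b \<in> L" "dist x b \<le> r ^ n * B" using close x by blast
    note b(2)
    also have "r ^ n * B \<le> r ^ n * (B + 1)" using \<open>0 \<le> r\<close> by (simp add: mult_left_mono)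
    also have "\<dots> < e" using n \<open>0 < B + 1\<close> by (simp add: pos_less_divide_eq)
    finally show ?thesis using b(1) by (auto simp: dist_commute)
  qed
  then show "x \<in> L" using closed_approachable[OF compact_imp_closed[OF L(1)]] by blast
qed

lemma hutchinson_Inter_iterates_eq:
  assumes G: "finite G" "\<And>g. g \<in> G \<Longrightarrow> inj g" and I: "hutchinson G I \<subseteq> I"
  shows "hutchinson G (\<Inter>n. (hutchinson G ^^ n) I) = (\<Inter>n. (hutchinson G ^^ n) I)"
    (is "hutchinson G ?K = ?K")
proof
  define F where "F n = (hutchinson G ^^ n) I" for n
  have F_antimono: "F n \<subseteq> F m" if "m \<le> n" for m n
    unfolding F_def using funpow_antimono_if_below[OF mono_hutchinson I that] .
  show "hutchinson G ?K \<subseteq> ?K"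
  proof -
    have "hutchinson G ?K \<subseteq> F n" for n
    proof -
      have "hutchinson G ?K \<subseteq> hutchinson G (F n)"
        by (rule monoD[OF mono_hutchinson]) (auto simp: F_def)
      also have "\<dots> = F (Suc n)" by (simp add: F_def)
      finally show ?thesis using F_antimono[of n "Suc n"] by simp
    qed
    then show ?thesis by (auto simp: F_def)
  qed
  show "?K \<subseteq> hutchinson G ?K"
  proof
    fix x assume x: "x \<in> ?K"
    \<comment> \<open>Some map of the finite family hits x from infinitely many stages F n; by
      injectivity its preimage of x is the same at all of them.\<close>
    define N where "N g = {n. x \<in> g ` F n}" for g
    have "x \<in> hutchinson G (F n)" for n
    proof -
      have "x \<in> (hutchinson G ^^ Suc n) I" using x by blast
      then show ?thesis by (simp add: F_def)
    qed
    then have "\<exists>g\<in>G. n \<in> N g" for n unfolding N_def hutchinson_def by blast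
    then have "(\<Union>g\<in>G. N g) = UNIV" by blast
    then obtain g where g: "g \<in> G" "infinite (N g)"
      using G(1) by (metis finite_UN infinite_UNIV_nat)
    then obtain y where y: "x = g y" unfolding N_def by (auto dest: infinite_imp_nonempty)
    have "y \<in> F m" for m
    proof -
      obtain n where n: "m \<le> n" "n \<in> N g" using g(2) infinite_nat_iff_unbounded_le by blast
      then obtain z where "z \<in> F n" "x = g z" unfolding N_def by blast
      then have "y \<in> F n" using y G(2)[OF g(1)] by (metis injD)
      then show ?thesis using F_antimono[OF n(1)] by blast
    qed
    then show "x \<in> hutchinson G ?K" using g(1) y by (auto simp: F_def hutchinson_def)
  qed
qed

lemma compact_hutchinson_iterate:
  fixes G :: "('a::topological_space \<Rightarrow> 'a) set"
  assumes "finite G" "\<And>g. g \<in> G \<Longrightarrow> continuous_on UNIV g" "compact I"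
  shows "compact ((hutchinson G ^^ n) I)"
proof (induction n)
  case (Suc n)
  then show ?case using compact_hutchinson[OF assms(1,2)] by simp
qed (simp add: assms(3))

lemma hutchinson_iterate_nonempty:
  fixes G :: "('a \<Rightarrow> 'a) set"
  assumes "G \<noteq> {}" "I \<noteq> {}"
  shows "(hutchinson G ^^ n) I \<noteq> {}"
proof (induction n)
  case (Suc n)
  then obtain x where "x \<in> (hutchinson G ^^ n) I" by blast
  moreover obtain g where "g \<in> G" using assms(1) by blast
  ultimately have "g x \<in> hutchinson G ((hutchinson G ^^ n) I)" by (auto simp: hutchinson_def)
  then show ?case by auto
qed (simp add: assms(2))

lemma hutchinson_attractor_eq_Inter:
  fixes I :: "'a::heine_borel set"
  assumes G: "finite G" "G \<noteq> {}" "\<And>g. g \<in> G \<Longrightarrow> r-lipschitz_on UNIV g"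
      "\<And>g. g \<in> G \<Longrightarrow> inj g" "r < 1"
    and I: "compact I" "I \<noteq> {}" "hutchinson G I \<subseteq> I"
  shows "(THE K. compact K \<and> K \<noteq> {} \<and> K = hutchinson G K) = (\<Inter>n. (hutchinson G ^^ n) I)"
proof (rule the1_equality)
  let ?F = "\<lambda>n. (hutchinson G ^^ n) I"
  have F: "compact (?F n)" "?F n \<noteq> {}" for n
    using compact_hutchinson_iterate[OF G(1) lipschitz_on_continuous_on[OF G(3)] I(1)]
      hutchinson_iterate_nonempty[OF G(2) I(2)] by blast+
  have F_antimono: "?F n \<subseteq> ?F m" if "m \<le> n" for m n
    using funpow_antimono_if_below[OF mono_hutchinson I(3) that] .
  show attractor: "compact (\<Inter>n. ?F n) \<and> (\<Inter>n. ?F n) \<noteq> {} \<and>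
      (\<Inter>n. ?F n) = hutchinson G (\<Inter>n. ?F n)"
    using compact_Inter[of "range ?F"] F compact_nest[of ?F] F_antimono
      hutchinson_Inter_iterates_eq[OF G(1,4) I(3)] by auto
  then show "\<exists>!K. compact K \<and> K \<noteq> {} \<and> K = hutchinson G K"
    using hutchinson_fixpoint_subset[OF G(3,5)] by (metis subset_antisym)
qed

lemma connected_hutchinson_attractor:
  fixes I :: "'a::euclidean_space set"
  assumes G: "finite G" "G \<noteq> {}" "\<And>g. g \<in> G \<Longrightarrow> r-lipschitz_on UNIV g"
      "\<And>g. g \<in> G \<Longrightarrow> inj g" "r < 1"
    and I: "compact I" "I \<noteq> {}" "hutchinson G I \<subseteq> I"
    and conn: "\<And>n. connected ((hutchinson G ^^ n) I)"
  shows "connected (THE K. compact K \<and> K \<noteq> {} \<and> K = hutchinson G K)"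
proof -
  have "connected (\<Inter>n. (hutchinson G ^^ n) I)"
  proof (rule connected_nest)
    show "compact ((hutchinson G ^^ n) I)" for n
      by (rule compact_hutchinson_iterate[OF G(1) lipschitz_on_continuous_on[OF G(3)] I(1)])
    show "(hutchinson G ^^ n) I \<subseteq> (hutchinson G ^^ m) I" if "m \<le> n" for m n
      by (rule funpow_antimono_if_below[OF mono_hutchinson I(3) that])
  qed (rule conn)
  then show ?thesis by (simp add: hutchinson_attractor_eq_Inter[OF G I])
qed

definition homotheties :: "real \<Rightarrow> ('a::real_vector \<Rightarrow> 'a) set" where
  "homotheties c = range (\<lambda>v x. c *\<^sub>R x + v)"

lemma homothetyI: "(\<lambda>x. c *\<^sub>R x + v) \<in> homotheties c"
  by (simp add: homotheties_def)

lemma homotheties_comp: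
  assumes "g \<in> homotheties c" "h \<in> homotheties c'"
  shows "g \<circ> h \<in> homotheties (c * c')"
proof -
  obtain v v' where "g = (\<lambda>x. c *\<^sub>R x + v)" "h = (\<lambda>x. c' *\<^sub>R x + v')"
    using assms by (auto simp: homotheties_def)
  then have "g \<circ> h = (\<lambda>x. (c * c') *\<^sub>R x + (c *\<^sub>R v' + v))"
    by (simp add: fun_eq_iff algebra_simps)
  then show ?thesis by (simp add: homotheties_def)
qed

lemma lipschitz_on_homothety:
  fixes g :: "'a::real_normed_vector \<Rightarrow> 'a"
  assumes "g \<in> homotheties c" "0 \<le> c"
  shows "c-lipschitz_on U g"
  using assms by (auto simp: homotheties_def lipschitz_on_def dist_norm
      simp flip: scaleR_diff_right)

lemma inj_homothety:
  assumes "g \<in> homotheties c" "c \<noteq> 0"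
  shows "inj g"
  using assms by (auto simp: homotheties_def inj_def)

lemma finite_digits: "finite (digits i)"
proof -
  have "digits i \<subseteq> {..4} \<times> {..4} \<times> {..4}"
    by (auto simp: digits_def digits0_def digits1_def)
  then show ?thesis by (rule finite_subset) auto
qed

lemma digits_nonempty: "digits i \<noteq> {}"
  by (auto simp: digits_def digits0_def digits1_def)

lemma vec3_Suc:
  "vec3 (Suc a, b, c) = vec3 (a, b, c) + axis 1 1"
  "vec3 (a, Suc b, c) = vec3 (a, b, c) + axis 2 1"
  "vec3 (a, b, Suc c) = vec3 (a, b, c) + axis 3 1"
  by (simp_all add: vec3_def vec_eq_iff forall_3 axis_def)

lemma Tword_Cons: "Tword (a # w) = Tmap a \<circ> Tword w"
  by (simp add: Tword_def)

lemma Tmap_eq_hutchinson: "Tmap i = hutchinson ((\<lambda>d x. (1/5) *\<^sub>R (vec3 d + x)) ` digits i)"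
  by (simp add: fun_eq_iff Tmap_def hutchinson_def image_image)

lemma Tword_eq_hutchinson_homotheties:
  "\<exists>G. finite G \<and> G \<noteq> {} \<and> G \<subseteq> homotheties ((1/5) ^ length w) \<and> Tword w = hutchinson G"
proof (induction w)
  case Nil
  have "(id :: real ^ 3 \<Rightarrow> _) \<in> homotheties 1"
    using homothetyI[of 1 "0 :: real ^ 3"] by (simp add: id_def)
  moreover have "Tword [] = hutchinson {id}" by (simp add: Tword_def hutchinson_def fun_eq_iff)
  ultimately show ?case by auto
next
  case (Cons a w)
  then obtain G where G: "finite G" "G \<noteq> {}" "G \<subseteq> homotheties ((1/5) ^ length w)"
    and TG: "Tword w = hutchinson G" by blast
  define D where "D = (\<lambda>d x. (1/5) *\<^sub>R (vec3 d + x)) ` digits a"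
  have "(\<lambda>x. (1/5) *\<^sub>R (vec3 d + x)) = (\<lambda>x. (1/5) *\<^sub>R x + (1/5) *\<^sub>R vec3 d)" for d
    by (simp add: fun_eq_iff algebra_simps)
  then have D: "finite D" "D \<noteq> {}" "D \<subseteq> homotheties (1/5)"
    using finite_digits digits_nonempty by (auto simp: D_def homothetyI)
  have "Tword (a # w) = hutchinson ((\<lambda>(g, h). g \<circ> h) ` (D \<times> G))"
    by (simp add: Tword_Cons TG Tmap_eq_hutchinson D_def fun_eq_iff hutchinson_hutchinson)
  moreover have "(\<lambda>(g, h). g \<circ> h) ` (D \<times> G) \<subseteq> homotheties (1/5 * (1/5) ^ length w)"
  proof clarify
    fix g h assume "g \<in> D" "h \<in> G"
    then show "g \<circ> h \<in> homotheties (1/5 * (1/5) ^ length w)"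
      using D(3) G(3) by (intro homotheties_comp) auto
  qed
  ultimately show ?case
    using D G by (intro exI[of _ "(\<lambda>(g, h). g \<circ> h) ` (D \<times> G)"]) auto
qed

definition piece :: "(real ^ 3) set \<Rightarrow> nat \<times> nat \<times> nat \<Rightarrow> (real ^ 3) set" where
  "piece A d = (\<lambda>x. (1/5) *\<^sub>R (vec3 d + x)) ` A"

definition unit_steps :: "(real ^ 3) set \<Rightarrow> bool" where
  "unit_steps A \<longleftrightarrow> (\<forall>k. \<exists>p\<in>A. p + axis k 1 \<in> A)"

definition grid_adjacent ::
    "(nat \<times> nat \<times> nat) set \<Rightarrow> ((nat \<times> nat \<times> nat) \<times> (nat \<times> nat \<times> nat)) set"
  where "grid_adjacent D = {(d, d'). d \<in> D \<and> d' \<in> D \<and>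
    (\<exists>k. vec3 d' = vec3 d + axis k 1 \<or> vec3 d = vec3 d' + axis k 1)}"

lemma piece_Int_piece_nonempty:
  assumes "unit_steps A" "vec3 d' = vec3 d + axis k 1"
  shows "piece A d \<inter> piece A d' \<noteq> {}"
proof -
  obtain p where p: "p \<in> A" "p + axis k 1 \<in> A" using assms(1) by (auto simp: unit_steps_def)
  have "(1/5) *\<^sub>R (vec3 d + (p + axis k 1)) = (1/5) *\<^sub>R (vec3 d' + p)"
    by (simp add: assms(2) algebra_simps)
  then show ?thesis using p unfolding piece_def by blast
qed

lemma grid_adjacent_rtrancl_line:
  assumes "\<And>t. t \<le> n \<Longrightarrow> f t \<in> D" "\<And>t. vec3 (f (Suc t)) = vec3 (f t) + axis k 1"
    and "x \<le> n" "y \<le> n"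
  shows "(f x, f y) \<in> (grid_adjacent D)\<^sup>*"
proof (rule rtrancl_along_path[OF _ _ assms(3,4)])
  show "sym (grid_adjacent D)" by (auto simp: sym_def grid_adjacent_def)
  show "(f t, f (Suc t)) \<in> grid_adjacent D" if "t < n" for t
    using that assms(1,2) by (auto simp: grid_adjacent_def)
qed

lemma digits_grid_connected: "\<exists>d0\<in>digits i. \<forall>d\<in>digits i. (d0, d) \<in> (grid_adjacent (digits i))\<^sup>*"
proof (cases "i = 0")
  case True
  let ?R = "grid_adjacent digits0"
  have "((2, 2, 2), d) \<in> ?R\<^sup>*" if "d \<in> digits0" for d
  proof -
    from that consider t where "t \<le> 4" "d = (t, 2, 2)" | t where "t \<le> 4" "d = (2, t, 2)"
      | t where "t \<le> 4" "d = (2, 2, t)"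
      by (auto simp: digits0_def)
    then show ?thesis
    proof cases
      case 1
      then show ?thesis using grid_adjacent_rtrancl_line[of 4 "\<lambda>t. (t, 2, 2)" digits0 1 2 t]
        by (simp add: digits0_def vec3_Suc)
    next
      case 2
      then show ?thesis using grid_adjacent_rtrancl_line[of 4 "\<lambda>t. (2, t, 2)" digits0 2 2 t]
        by (simp add: digits0_def vec3_Suc)
    next
      case 3
      then show ?thesis using grid_adjacent_rtrancl_line[of 4 "\<lambda>t. (2, 2, t)" digits0 3 2 t]
        by (simp add: digits0_def vec3_Suc)
    qed
  qed
  moreover have "(2, 2, 2) \<in> digits0" by (simp add: digits0_def)
  ultimately show ?thesis using True unfolding digits_def by (intro bexI[of _ "(2, 2, 2)"]) auto
next
  case False
  let ?R = "grid_adjacent digits1"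
  \<comment> \<open>D_1 is the union of the twelve edges of the grid cube; every digit is reached from
    the corner 0 along at most three edges.\<close>
  have x_edge: "((x, b, c), (y, b, c)) \<in> ?R\<^sup>*" if "b \<in> {0, 4}" "c \<in> {0, 4}" "x \<le> 4" "y \<le> 4"
    for x y b c
    using that grid_adjacent_rtrancl_line[of 4 "\<lambda>t. (t, b, c)" digits1 1 x y]
    by (auto simp: digits1_def vec3_Suc)
  have y_edge: "((a, x, c), (a, y, c)) \<in> ?R\<^sup>*" if "a \<in> {0, 4}" "c \<in> {0, 4}" "x \<le> 4" "y \<le> 4"
    for x y a c
    using that grid_adjacent_rtrancl_line[of 4 "\<lambda>t. (a, t, c)" digits1 2 x y]
    by (auto simp: digits1_def vec3_Suc)
  have z_edge: "((a, b, x), (a, b, y)) \<in> ?R\<^sup>*" if "a \<in> {0, 4}" "b \<in> {0, 4}" "x \<le> 4" "y \<le> 4"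
    for x y a b
    using that grid_adjacent_rtrancl_line[of 4 "\<lambda>t. (a, b, t)" digits1 3 x y]
    by (auto simp: digits1_def vec3_Suc)
  have "((0, 0, 0), (a, b, c)) \<in> ?R\<^sup>*" if "(a, b, c) \<in> digits1" for a b c
  proof -
    have le: "a \<le> 4" "b \<le> 4" "c \<le> 4" using that by (auto simp: digits1_def)
    from that consider "b \<in> {0, 4}" "c \<in> {0, 4}" | "a \<in> {0, 4}" "c \<in> {0, 4}"
      | "a \<in> {0, 4}" "b \<in> {0, 4}"
      by (auto simp: digits1_def)
    then show ?thesis
    proof cases
      case 1
      have "((0, 0, 0), (0, b, 0)) \<in> ?R\<^sup>*" "((0, b, 0), (0, b, c)) \<in> ?R\<^sup>*"
        "((0, b, c), (a, b, c)) \<in> ?R\<^sup>*"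
        using y_edge[of 0 0 0 b] z_edge[of 0 b 0 c] x_edge[of b c 0 a] le 1 by simp_all
      then show ?thesis by (meson rtrancl_trans)
    next
      case 2
      have "((0, 0, 0), (a, 0, 0)) \<in> ?R\<^sup>*" "((a, 0, 0), (a, 0, c)) \<in> ?R\<^sup>*"
        "((a, 0, c), (a, b, c)) \<in> ?R\<^sup>*"
        using x_edge[of 0 0 0 a] z_edge[of a 0 0 c] y_edge[of a c 0 b] le 2 by simp_all
      then show ?thesis by (meson rtrancl_trans)
    next
      case 3
      have "((0, 0, 0), (a, 0, 0)) \<in> ?R\<^sup>*" "((a, 0, 0), (a, b, 0)) \<in> ?R\<^sup>*"
        "((a, b, 0), (a, b, c)) \<in> ?R\<^sup>*"
        using x_edge[of 0 0 0 a] y_edge[of a 0 0 b] z_edge[of a b 0 c] le 3 by simp_all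
      then show ?thesis by (meson rtrancl_trans)
    qed
  qed
  moreover have "(0, 0, 0) \<in> digits1" by (simp add: digits1_def)
  ultimately show ?thesis using False unfolding digits_def by (intro bexI[of _ "(0, 0, 0)"]) auto
qed

lemma connected_Tmap:
  assumes "connected A" "unit_steps A"
  shows "connected (Tmap i A)"
proof -
  let ?R = "grid_adjacent (digits i)"
  obtain d0 where d0: "d0 \<in> digits i" "\<And>d. d \<in> digits i \<Longrightarrow> (d0, d) \<in> ?R\<^sup>*"
    using digits_grid_connected by blast
  have "A \<noteq> {}" using assms(2) by (auto simp: unit_steps_def)
  have "connected (\<Union>d\<in>digits i. piece A d)"
  proof (rule connected_UN_if_rtrancl_reachable[OF _ d0(1) _ _ _ d0(2)])
    show "connected (piece A d)" for d
      unfolding piece_def by (intro connected_continuous_image continuous_intros assms(1))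
    show "piece A d0 \<noteq> {}" using \<open>A \<noteq> {}\<close> by (simp add: piece_def)
    show "?R \<subseteq> digits i \<times> digits i" by (auto simp: grid_adjacent_def)
    show "piece A d \<inter> piece A d' \<noteq> {}" if "(d, d') \<in> ?R" for d d'
    proof -
      from that obtain k where "vec3 d' = vec3 d + axis k 1 \<or> vec3 d = vec3 d' + axis k 1"
        by (auto simp: grid_adjacent_def)
      then show ?thesis using piece_Int_piece_nonempty[OF assms(2)] by (metis Int_commute)
    qed
  qed
  then show ?thesis by (simp add: Tmap_def piece_def)
qed

lemma digits_opposite_faces: "\<exists>d\<in>digits i. \<exists>d'\<in>digits i. vec3 d' = vec3 d + 4 *\<^sub>R axis k 1"
proof -
  have shift: "vec3 (4, b, c) = vec3 (0, b, c) + 4 *\<^sub>R axis 1 1"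
    "vec3 (a, 4, c) = vec3 (a, 0, c) + 4 *\<^sub>R axis 2 1"
    "vec3 (a, b, 4) = vec3 (a, b, 0) + 4 *\<^sub>R axis 3 1" for a b c
    by (simp_all add: vec3_def vec_eq_iff forall_3 axis_def)
  have "(0, 2, 2) \<in> digits0" "(4, 2, 2) \<in> digits0" "(2, 0, 2) \<in> digits0" "(2, 4, 2) \<in> digits0"
    "(2, 2, 0) \<in> digits0" "(2, 2, 4) \<in> digits0"
    "(0, 0, 0) \<in> digits1" "(4, 0, 0) \<in> digits1" "(0, 4, 0) \<in> digits1" "(0, 0, 4) \<in> digits1"
    by (simp_all add: digits0_def digits1_def)
  then show ?thesis
    using shift exhaust_3[of k] unfolding digits_def by (cases "i = 0") (simp; metis)+
qed

lemma unit_steps_Tmap: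
  assumes "unit_steps A"
  shows "unit_steps (Tmap i A)"
  unfolding unit_steps_def
proof
  fix k
  let ?e = "axis k 1 :: real ^ 3"
  obtain p where p: "p \<in> A" "p + ?e \<in> A" using assms by (auto simp: unit_steps_def)
  obtain d d' where d: "d \<in> digits i" "d' \<in> digits i" "vec3 d' = vec3 d + 4 *\<^sub>R ?e"
    using digits_opposite_faces by blast
  have "(1/5) *\<^sub>R (vec3 d + p) + ?e = (1/5) *\<^sub>R (vec3 d' + (p + ?e))"
    by (simp add: d(3) vec_eq_iff field_simps)
  then show "\<exists>q\<in>Tmap i A. q + ?e \<in> Tmap i A"
    using p d(1,2) unfolding Tmap_def by (metis (no_types, lifting) UN_I image_eqI)
qed

lemma Tword_preserves_connected_unit_steps:
  assumes "connected A" "unit_steps A"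
  shows "connected (Tword w A) \<and> unit_steps (Tword w A)"
  using assms by (induction w) (simp_all add: Tword_def connected_Tmap unit_steps_Tmap)

lemma connected_unit_steps_cubeI: "connected cubeI" "unit_steps cubeI"
  by (auto simp: cubeI_def convex_connected unit_steps_def mem_box_cart axis_def intro: bexI[of _ 0])

lemma Tword_cubeI_subset: "Tword w cubeI \<subseteq> cubeI"
proof (induction w)
  case (Cons a w)
  have "Tmap a cubeI \<subseteq> cubeI"
    by (auto simp: Tmap_def cubeI_def mem_box_cart vec3_def forall_3 vector_3 digits_def
        digits0_def digits1_def split: if_splits)
  moreover have "Tmap a (Tword w cubeI) \<subseteq> Tmap a cubeI" using Cons by (auto simp: Tmap_def)
  ultimately show ?case by (simp add: Tword_Cons)
qed (simp add: Tword_def)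

theorem lemma1:
  fixes w :: "nat list"
  assumes "w \<noteq> []" and "set w \<subseteq> {0, 1}"
  shows "connected (Fset w) \<and> connected (Kset w)"
proof -
  obtain G where G: "finite G" "G \<noteq> {}" "G \<subseteq> homotheties ((1/5) ^ length w)"
    and TG: "Tword w = hutchinson G"
    using Tword_eq_hutchinson_homotheties by blast
  define r :: real where "r = (1/5) ^ length w"
  have r: "0 < r" "r < 1" using assms(1) by (auto simp: r_def power_less_one_iff)
  have lip: "r-lipschitz_on UNIV g" and inj: "inj g" if "g \<in> G" for g
    using that G(3) r lipschitz_on_homothety inj_homothety unfolding r_def by fastforce+
  have F: "connected ((hutchinson G ^^ n) cubeI) \<and> unit_steps ((hutchinson G ^^ n) cubeI)" for n
    by (induction n)
      (simp_all add: connected_unit_steps_cubeI Tword_preserves_connected_unit_steps flip: TG)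
  have "0 \<in> cubeI" by (simp add: cubeI_def mem_box_cart)
  then have I: "compact cubeI" "cubeI \<noteq> {}" "hutchinson G cubeI \<subseteq> cubeI"
    using Tword_cubeI_subset[of w] by (auto simp: cubeI_def TG)
  have "connected (Kset w)"
    unfolding Kset_def TG
    using connected_hutchinson_attractor[OF G(1,2) lip inj r(2) I] F by blast
  then show ?thesis using F[of 1] by (simp add: Fset_def TG)
qed

end
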